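(* Let $Q\in\mathbb R^{3\times3}$ be symmetric positive semi-definite with eigenvalues $\lambda_1^Q,\lambda_2^Q,\lambda_3^Q$, let $\mathbb U\subset\mathbb S^2$ be a finite set, and let $\Delta_Q^*:=\min_{v\in\mathcal E(Q)}\max_{u\in\mathbb U}\Delta_Q(u,v)$ with $\Delta_Q(u,v)=u^\top\big((\mathrm{tr}(Q)-2v^\top Qv)I_3-Q+2Qvv^\top\big)u$. (1) If $\mathbb U$ contains an orthonormal basis of $\mathbb R^3$ consisting of eigenvectors of $Q$, then: if $\lambda_1^Q=\lambda_2^Q=\lambda_3^Q>0$, $\Delta_Q^*\ge\frac23\lambda_1^Q$; if $\lambda_1^Q=\lambda_2^Q\ne\lambda_3^Q$ (with $\lambda_3^Q>0$), $\Delta_Q^*\ge\min\{\lambda_1^Q+\lambda_2^Q,\lambda_3^Q\}$; if the three eigenvalues are pairwise distinct, $\Delta_Q^*\ge\mathrm{tr}(Q)-\lambda_{\max}^Q$. (2) If $\mathrm{tr}(Q)-2\lambda_{\max}^Q>0$ and $\mathbb U$ contains some three mutually orthogonal unit vectors, then $\Delta_Q^*\ge\frac23(\mathrm{tr}(Q)-2\lambda_{\max}^Q)$.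
   Context: $\mathbb S^2$ is the set of unit vectors in $\mathbb R^3$. $\mathcal E(Q)$ denotes the set of all unit eigenvectors of $Q$. $\lambda_{\max}^Q$ is the largest eigenvalue of $Q$. *)

theory Defs
  imports "HOL-Analysis.Analysis"
begin

type_synonym mat3 = "real^3^3"
type_synonym vec3 = "real^3"

definition outer :: "vec3 \<Rightarrow> vec3 \<Rightarrow> mat3" where
  "outer v w = (\<chi> i j. v $ i * w $ j)"

definition sym_psd :: "mat3 \<Rightarrow> bool" where
  "sym_psd Q \<longleftrightarrow> transpose Q = Q \<and> (\<forall>x. 0 \<le> x \<bullet> (Q *v x))"

definition eigenvalues3 :: "mat3 \<Rightarrow> real \<Rightarrow> real \<Rightarrow> real \<Rightarrow> bool" where
  "eigenvalues3 Q l1 l2 l3 \<longleftrightarrow>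
     (\<forall>x. det (x *\<^sub>R mat 1 - Q) = (x - l1) * (x - l2) * (x - l3))"

definition unit_eigvecs :: "mat3 \<Rightarrow> vec3 set" where
  "unit_eigvecs Q = {v. norm v = 1 \<and> (\<exists>c. Q *v v = c *\<^sub>R v)}"

definition DeltaQ :: "mat3 \<Rightarrow> vec3 \<Rightarrow> vec3 \<Rightarrow> real" where
  "DeltaQ Q u v = u \<bullet> ((((trace Q - 2 * (v \<bullet> (Q *v v))) *\<^sub>R mat 1) - Q
                         + 2 *\<^sub>R (Q ** outer v v)) *v u)"

definition DeltaQ_star :: "mat3 \<Rightarrow> vec3 set \<Rightarrow> real" where
  "DeltaQ_star Q U = (INF v \<in> unit_eigvecs Q. Max ((\<lambda>u. DeltaQ Q u v) ` U))"

end

theory Submission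
  imports Defs "HOL-Computational_Algebra.Polynomial"
begin

text \<open>
  For a unit eigenvector \<open>v\<close> of \<open>Q\<close> with eigenvalue \<open>\<mu>\<close> one has
  \<open>\<Delta>\<^sub>Q(u,v) = (tr Q - 2\<mu>)|u|\<^sup>2 - u\<^sup>TQu + 2\<mu>(u\<cdot>v)\<^sup>2\<close>.
  Summed over an orthonormal basis \<open>e\<^sub>1, e\<^sub>2, e\<^sub>3\<close> contained in \<open>U\<close>, Parseval's identity and
  \<open>tr Q = \<Sum>\<^sub>i e\<^sub>i\<^sup>TQe\<^sub>i\<close> give \<open>\<Sum>\<^sub>i \<Delta>\<^sub>Q(e\<^sub>i,v) = 2 tr Q - 4\<mu>\<close>, so the maximum over \<open>U\<close>
  is at least \<open>2/3 (tr Q - 2\<mu>) \<ge> 2/3 (tr Q - 2\<lambda>\<^sub>m\<^sub>a\<^sub>x)\<close>; this is (2).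

  If the \<open>e\<^sub>i\<close> are eigenvectors, with eigenvalues \<open>a\<^sub>i\<close>, then \<open>v\<close> is orthogonal to every \<open>e\<^sub>i\<close>
  with \<open>a\<^sub>i \<noteq> \<mu>\<close>, and the sum over the \<open>k\<close> basis vectors with \<open>a\<^sub>i = \<mu>\<close> alone is
  \<open>k (tr Q - 3\<mu>) + 2\<mu>\<close>. The \<open>a\<^sub>i\<close> are the roots of the characteristic polynomial, so \<open>k\<close> is the
  multiplicity of \<open>\<mu>\<close>, and the three cases of (1) follow by evaluating \<open>tr Q - 3\<mu> + 2\<mu>/k\<close>.
\<close>

lemma det_eq_0_iff_nontrivial_kernel:
  fixes A :: "real^'n^'n"
  shows "det A = 0 \<longleftrightarrow> (\<exists>x. x \<noteq> 0 \<and> A *v x = 0)"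
  using invertible_det_nz[of A] invertible_left_inverse[of A] matrix_left_invertible_ker[of A] by blast

lemma charpoly_root_iff_unit_eigenvector:
  fixes Q :: "real^'n^'n"
  shows "det (\<mu> *\<^sub>R mat 1 - Q) = 0 \<longleftrightarrow> (\<exists>v. norm v = 1 \<and> Q *v v = \<mu> *\<^sub>R v)"
proof -
  have ker: "(\<mu> *\<^sub>R mat 1 - Q) *v x = 0 \<longleftrightarrow> Q *v x = \<mu> *\<^sub>R x" for x
    by (auto simp: matrix_vector_mult_diff_rdistrib scaleR_matrix_vector_assoc[symmetric])
  have "(\<exists>x. x \<noteq> 0 \<and> Q *v x = \<mu> *\<^sub>R x) \<longleftrightarrow> (\<exists>v. norm v = 1 \<and> Q *v v = \<mu> *\<^sub>R v)"
  proof
    assume "\<exists>x. x \<noteq> 0 \<and> Q *v x = \<mu> *\<^sub>R x"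
    then obtain x where "x \<noteq> 0" "Q *v x = \<mu> *\<^sub>R x" by blast
    then show "\<exists>v. norm v = 1 \<and> Q *v v = \<mu> *\<^sub>R v"
      by (intro exI[of _ "x /\<^sub>R norm x"]) (simp add: matrix_vector_mult_scaleR)
  qed (metis norm_zero zero_neq_one)
  then show ?thesis by (simp add: det_eq_0_iff_nontrivial_kernel ker)
qed

lemma orthogonal_matrix_orthonormal_family:
  fixes e :: "'n::finite \<Rightarrow> real^'n"
  assumes "\<And>i j. e i \<bullet> e j = (if i = j then 1 else 0)"
  shows "orthogonal_matrix (\<chi> i. e i)"
  using assms by (auto simp: orthogonal_matrix_orthonormal_rows row_def norm_eq_1 orthogonal_def)

lemma inner_eq_sum_orthonormal:
  fixes e :: "'n::finite \<Rightarrow> real^'n"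
  assumes "\<And>i j. e i \<bullet> e j = (if i = j then 1 else 0)"
  shows "x \<bullet> y = (\<Sum>i\<in>UNIV. (e i \<bullet> x) * (e i \<bullet> y))"
proof -
  let ?E = "(\<chi> i. e i) :: real^'n^'n"
  have "x \<bullet> y = ((transpose ?E ** ?E) *v x) \<bullet> y"
    using orthogonal_matrix_orthonormal_family[OF assms] by (simp add: orthogonal_matrix_def)
  also have "\<dots> = (?E *v x) \<bullet> (?E *v y)"
    by (simp add: matrix_vector_mul_assoc[symmetric] dot_lmul_matrix)
  also have "\<dots> = (\<Sum>i\<in>UNIV. (e i \<bullet> x) * (e i \<bullet> y))"
    by (simp add: inner_vec_def matrix_vector_mult_def mult.commute)
  finally show ?thesis .
qed

lemma rows_matrix_conj_nth:
  fixes e :: "'n::finite \<Rightarrow> real^'n"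
  shows "((\<chi> i. e i) ** M ** transpose (\<chi> i. e i)) $ i $ j = e i \<bullet> (M *v e j)"
proof -
  have "((\<chi> i. e i) ** M ** transpose (\<chi> i. e i)) $ i $ j
      = (\<Sum>k\<in>UNIV. (\<Sum>l\<in>UNIV. e i $ l * M $ l $ k) * e j $ k)"
    by (simp add: matrix_matrix_mult_def transpose_def)
  also have "\<dots> = (\<Sum>l\<in>UNIV. e i $ l * (\<Sum>k\<in>UNIV. M $ l $ k * e j $ k))"
    by (simp add: sum_distrib_left sum_distrib_right mult.assoc) (rule sum.swap)
  finally show ?thesis by (simp add: inner_vec_def matrix_vector_mult_def)
qed

lemma trace_eq_sum_orthonormal:
  fixes e :: "'n::finite \<Rightarrow> real^'n"
  assumes "\<And>i j. e i \<bullet> e j = (if i = j then 1 else 0)"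
  shows "trace Q = (\<Sum>i\<in>UNIV. e i \<bullet> (Q *v e i))"
proof -
  let ?E = "(\<chi> i. e i) :: real^'n^'n"
  have "trace (?E ** Q ** transpose ?E) = trace ((Q ** transpose ?E) ** ?E)"
    using trace_mul_sym[of ?E "Q ** transpose ?E"] by (simp add: matrix_mul_assoc)
  also have "\<dots> = trace Q"
    using orthogonal_matrix_orthonormal_family[OF assms]
    by (metis orthogonal_matrix_def matrix_mul_assoc matrix_mul_rid)
  finally show ?thesis
    by (simp add: trace_def rows_matrix_conj_nth)
qed

lemma det_charpoly_eq_prod_eigenbasis:
  fixes e :: "'n::finite \<Rightarrow> real^'n"
  assumes on: "\<And>i j. e i \<bullet> e j = (if i = j then 1 else 0)"
    and eig: "\<And>i. Q *v e i = a i *\<^sub>R e i"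
  shows "det (x *\<^sub>R mat 1 - Q) = (\<Prod>i\<in>UNIV. x - a i)"
proof -
  let ?E = "(\<chi> i. e i) :: real^'n^'n"
  have orth: "orthogonal_matrix ?E"
    by (rule orthogonal_matrix_orthonormal_family[OF on])
  have diag: "?E ** (x *\<^sub>R mat 1 - Q) ** transpose ?E = (\<chi> i j. if i = j then x - a i else 0)"
    using on by (simp add: vec_eq_iff rows_matrix_conj_nth eig matrix_vector_mult_diff_rdistrib
        scaleR_matrix_vector_assoc[symmetric] inner_diff_right)
  have "det (x *\<^sub>R mat 1 - Q) = det ?E * det (x *\<^sub>R mat 1 - Q) * det (transpose ?E)"
    using det_orthogonal_matrix[OF orth] by (auto simp: det_transpose)
  also have "\<dots> = (\<Prod>i\<in>UNIV. x - a i)"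
    by (simp only: det_mul[symmetric] diag) (simp add: det_diagonal)
  finally show ?thesis .
qed

lemma order_prod_mset_linear_factors:
  "order \<mu> (\<Prod>m\<in>#M. [:-m, 1:]) = count M (\<mu> :: 'a::idom)"
proof (induction M)
  case (add m M)
  define P where "P = (\<Prod>m\<in>#M. [:-m, 1:])"
  have "P \<noteq> 0" and "[:-m, 1:] \<noteq> 0"
    by (auto simp: P_def prod_mset_zero_iff)
  then have "order \<mu> ([:-m, 1:] * P) = order \<mu> [:-m, 1:] + order \<mu> P"
    by (intro order_mult) (simp only: mult_eq_0_iff, blast)
  moreover have "order \<mu> [:-m, 1:] = (if \<mu> = m then 1 else 0)"
    using order_power_n_n[of m 1] by (auto intro: order_0I)
  ultimately show ?case
    using add by (simp add: P_def)
qed simp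

lemma mset_eq_if_prod_linear_factors_eq:
  fixes A B :: "'a::{idom, ring_char_0} multiset"
  assumes "\<And>x. (\<Prod>m\<in>#A. x - m) = (\<Prod>m\<in>#B. x - m)"
  shows "A = B"
proof -
  have "poly (\<Prod>m\<in>#A. [:-m, 1:]) = poly (\<Prod>m\<in>#B. [:-m, 1:])"
    using assms by (simp add: poly_prod_mset multiset.map_comp comp_def fun_eq_iff)
  then have "(\<Prod>m\<in>#A. [:-m, 1:]) = (\<Prod>m\<in>#B. [:-m, 1:])"
    by (simp add: poly_eq_poly_eq_iff)
  then show ?thesis
    by (metis multiset_eqI order_prod_mset_linear_factors)
qed

lemma count_image_mset_mset_set_UNIV:
  "count (image_mset a (mset_set (UNIV :: 'n::finite set))) \<mu> = card {i. a i = \<mu>}"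
  by (simp add: count_image_mset vimage_def)

lemma trace_eq_sum_eigenvalues3:
  assumes "eigenvalues3 Q l1 l2 l3"
  shows "trace Q = l1 + l2 + l3"
proof -
  let ?f = "\<lambda>x. det (x *\<^sub>R mat 1 - Q)"
  have f: "?f x = (x - l1) * (x - l2) * (x - l3)" for x
    using assms unfolding eigenvalues3_def by blast
  \<comment> \<open>\<open>f 1 + f (-1) - 2 f 0\<close> is twice the quadratic coefficient of the monic cubic \<open>f\<close>.\<close>
  have "?f 1 + ?f (-1) - 2 * ?f 0 = - 2 * trace Q"
    by (simp add: det_3 trace_def sum_3 mat_def algebra_simps)
  moreover have "?f 1 + ?f (-1) - 2 * ?f 0 = - 2 * (l1 + l2 + l3)"
    unfolding f by (simp add: algebra_simps)
  ultimately show ?thesis by simp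
qed

lemma eigenvalue_mem_eigenvalues3:
  assumes "eigenvalues3 Q l1 l2 l3" "norm v = 1" "Q *v v = \<mu> *\<^sub>R v"
  shows "\<mu> \<in> {l1, l2, l3}"
proof -
  have "det (\<mu> *\<^sub>R mat 1 - Q) = 0"
    using assms(2,3) charpoly_root_iff_unit_eigenvector by blast
  then show ?thesis
    using assms(1) unfolding eigenvalues3_def by auto
qed

lemma unit_eigvecs_nonempty:
  assumes "eigenvalues3 Q l1 l2 l3"
  shows "unit_eigvecs Q \<noteq> {}"
proof -
  have "det (l1 *\<^sub>R mat 1 - Q) = 0"
    using assms unfolding eigenvalues3_def by simp
  then show ?thesis
    unfolding charpoly_root_iff_unit_eigenvector unit_eigvecs_def by blast
qed

lemma mset_eigenvalues3_eigenbasis: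
  fixes e :: "3 \<Rightarrow> real^3"
  assumes "eigenvalues3 Q l1 l2 l3"
    and "\<And>i j. e i \<bullet> e j = (if i = j then 1 else 0)"
    and "\<And>i. Q *v e i = a i *\<^sub>R e i"
  shows "image_mset a (mset_set UNIV) = {#l1, l2, l3#}"
proof (rule mset_eq_if_prod_linear_factors_eq)
  fix x :: real
  have "(\<Prod>m\<in>#image_mset a (mset_set UNIV). x - m) = (\<Prod>i\<in>UNIV. x - a i)"
    by (simp add: prod_unfold_prod_mset multiset.map_comp comp_def)
  also have "\<dots> = det (x *\<^sub>R mat 1 - Q)"
    using det_charpoly_eq_prod_eigenbasis[OF assms(2,3)] by simp
  also have "\<dots> = (\<Prod>m\<in>#{#l1, l2, l3#}. x - m)"
    using assms(1) unfolding eigenvalues3_def by (simp add: mult.assoc)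
  finally show "(\<Prod>m\<in>#image_mset a (mset_set UNIV). x - m) = (\<Prod>m\<in>#{#l1, l2, l3#}. x - m)" .
qed

lemma inner_eigenvectors_eq_0:
  fixes Q :: "real^'n^'n"
  assumes "transpose Q = Q" "Q *v u = \<alpha> *\<^sub>R u" "Q *v v = \<beta> *\<^sub>R v" "\<alpha> \<noteq> \<beta>"
  shows "u \<bullet> v = 0"
proof -
  have "\<alpha> * (u \<bullet> v) = (Q *v u) \<bullet> v"
    using assms(2) by simp
  also have "\<dots> = u \<bullet> (Q *v v)"
    by (metis assms(1) dot_lmul_matrix vector_transpose_matrix)
  also have "\<dots> = \<beta> * (u \<bullet> v)"
    using assms(3) by simp
  finally show ?thesis
    using assms(4) by simp
qed

lemma matrix_mult_outer_vector: "((Q::real^3^3) ** outer v v) *v u = (v \<bullet> u) *\<^sub>R (Q *v v)"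
  by (simp add: vec_eq_iff matrix_vector_mult_def matrix_matrix_mult_def outer_def inner_vec_def
      sum_distrib_left sum_distrib_right mult_ac) (subst sum.swap, simp add: mult_ac)

lemma DeltaQ_eigenvector:
  assumes "Q *v v = \<mu> *\<^sub>R v" "norm v = 1"
  shows "DeltaQ Q u v = (trace Q - 2 * \<mu>) * (u \<bullet> u) - u \<bullet> (Q *v u) + 2 * \<mu> * (u \<bullet> v)\<^sup>2"
proof -
  have "v \<bullet> (Q *v v) = \<mu>"
    using assms by (simp add: dot_square_norm)
  then have "DeltaQ Q u v = u \<bullet> ((trace Q - 2 * \<mu>) *\<^sub>R u - Q *v u + 2 *\<^sub>R ((v \<bullet> u) *\<^sub>R (Q *v v)))"
    unfolding DeltaQ_def
    by (simp add: matrix_vector_mult_add_rdistrib matrix_vector_mult_diff_rdistrib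
        matrix_scaleR_vector_ac[symmetric] matrix_mult_outer_vector scaleR_matrix_vector_assoc)
  then show ?thesis
    using assms(1) by (simp add: inner_diff_right inner_add_right power2_eq_square inner_commute)
qed

lemma sum_DeltaQ_orthonormal:
  fixes e :: "3 \<Rightarrow> real^3"
  assumes on: "\<And>i j. e i \<bullet> e j = (if i = j then 1 else 0)"
    and "Q *v v = \<mu> *\<^sub>R v" "norm v = 1"
  shows "(\<Sum>i\<in>UNIV. DeltaQ Q (e i) v) = 2 * trace Q - 4 * \<mu>"
proof -
  have parseval: "(\<Sum>i\<in>UNIV. (e i \<bullet> v)\<^sup>2) = 1"
    using inner_eq_sum_orthonormal[OF on, of v v] \<open>norm v = 1\<close>
    by (simp add: power2_eq_square dot_square_norm)
  have "(\<Sum>i\<in>UNIV. DeltaQ Q (e i) v)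
      = (\<Sum>i\<in>UNIV. (trace Q - 2 * \<mu>) - e i \<bullet> (Q *v e i) + 2 * \<mu> * (e i \<bullet> v)\<^sup>2)"
    using on by (simp add: DeltaQ_eigenvector[OF assms(2,3)])
  also have "\<dots> = 3 * (trace Q - 2 * \<mu>) - trace Q + 2 * \<mu>"
    by (simp add: sum.distrib sum_subtractf trace_eq_sum_orthonormal[OF on, of Q]
        sum_distrib_left[symmetric] parseval)
  finally show ?thesis by simp
qed

lemma sum_DeltaQ_eigenspace:
  fixes e :: "3 \<Rightarrow> real^3"
  assumes "transpose Q = Q"
    and on: "\<And>i j. e i \<bullet> e j = (if i = j then 1 else 0)"
    and eig: "\<And>i. Q *v e i = a i *\<^sub>R e i"
    and v: "Q *v v = \<mu> *\<^sub>R v" "norm v = 1"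
  shows "(\<Sum>i | a i = \<mu>. DeltaQ Q (e i) v) = card {i. a i = \<mu>} * (trace Q - 3 * \<mu>) + 2 * \<mu>"
proof -
  let ?S = "{i. a i = \<mu>}"
  have "(\<Sum>i\<in>?S. (e i \<bullet> v)\<^sup>2) = (\<Sum>i\<in>UNIV. (e i \<bullet> v)\<^sup>2)"
    using inner_eigenvectors_eq_0[OF assms(1) eig v(1)] by (intro sum.mono_neutral_left) auto
  also have "\<dots> = 1"
    using inner_eq_sum_orthonormal[OF on, of v v] v(2)
    by (simp add: power2_eq_square dot_square_norm)
  finally have parseval: "(\<Sum>i\<in>?S. (e i \<bullet> v)\<^sup>2) = 1" .
  have "(\<Sum>i\<in>?S. DeltaQ Q (e i) v) = (\<Sum>i\<in>?S. (trace Q - 3 * \<mu>) + 2 * \<mu> * (e i \<bullet> v)\<^sup>2)"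
    using on eig by (intro sum.cong) (simp_all add: DeltaQ_eigenvector[OF v])
  also have "\<dots> = card ?S * (trace Q - 3 * \<mu>) + 2 * \<mu>"
    by (simp add: sum.distrib sum_distrib_left[symmetric] parseval)
  finally show ?thesis .
qed

lemma sum_le_card_mult_Max:
  fixes f :: "'a \<Rightarrow> real"
  assumes "finite U" "g ` S \<subseteq> U"
  shows "(\<Sum>i\<in>S. f (g i)) \<le> card S * Max (f ` U)"
  using assms by (intro sum_bounded_above) auto

lemma DeltaQ_star_ge_orthonormal:
  fixes e :: "3 \<Rightarrow> real^3"
  assumes ev: "eigenvalues3 Q l1 l2 l3" and "finite U"
    and on: "\<And>i j. e i \<bullet> e j = (if i = j then 1 else 0)" and "range e \<subseteq> U"
  shows "2/3 * (trace Q - 2 * Max {l1, l2, l3}) \<le> DeltaQ_star Q U"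
  unfolding DeltaQ_star_def
proof (rule cINF_greatest[OF unit_eigvecs_nonempty[OF ev]])
  fix v assume "v \<in> unit_eigvecs Q"
  then obtain \<mu> where v: "Q *v v = \<mu> *\<^sub>R v" "norm v = 1"
    unfolding unit_eigvecs_def by blast
  have "\<mu> \<le> Max {l1, l2, l3}"
    using eigenvalue_mem_eigenvalues3[OF ev v(2,1)] by (intro Max_ge) auto
  moreover have "2 * trace Q - 4 * \<mu> \<le> 3 * Max ((\<lambda>u. DeltaQ Q u v) ` U)"
    using sum_le_card_mult_Max[OF \<open>finite U\<close> \<open>range e \<subseteq> U\<close>, of "\<lambda>u. DeltaQ Q u v"]
    by (simp add: sum_DeltaQ_orthonormal[OF on v])
  ultimately show "2/3 * (trace Q - 2 * Max {l1, l2, l3}) \<le> Max ((\<lambda>u. DeltaQ Q u v) ` U)"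
    by (simp add: field_simps)
qed

lemma DeltaQ_star_ge_eigenbasis:
  fixes e :: "3 \<Rightarrow> real^3"
  assumes sym: "transpose Q = Q" and ev: "eigenvalues3 Q l1 l2 l3" and "finite U"
    and on: "\<And>i j. e i \<bullet> e j = (if i = j then 1 else 0)"
    and range: "range e \<subseteq> U \<inter> unit_eigvecs Q"
    and bound: "\<And>\<mu>. \<mu> \<in># {#l1, l2, l3#} \<Longrightarrow>
      b \<le> trace Q - 3 * \<mu> + 2 * \<mu> / count {#l1, l2, l3#} \<mu>"
  shows "b \<le> DeltaQ_star Q U"
  unfolding DeltaQ_star_def
proof (rule cINF_greatest[OF unit_eigvecs_nonempty[OF ev]])
  have "\<exists>c. Q *v e i = c *\<^sub>R e i" for i
    using range unfolding unit_eigvecs_def by blast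
  then obtain a where eig: "\<And>i. Q *v e i = a i *\<^sub>R e i"
    by metis
  fix v assume "v \<in> unit_eigvecs Q"
  then obtain \<mu> where v: "Q *v v = \<mu> *\<^sub>R v" "norm v = 1"
    unfolding unit_eigvecs_def by blast
  define k where "k = real (card {i. a i = \<mu>})"
  have "k = count {#l1, l2, l3#} \<mu>"
    using mset_eigenvalues3_eigenbasis[OF ev on eig] count_image_mset_mset_set_UNIV k_def by metis
  moreover have "\<mu> \<in># {#l1, l2, l3#}"
    using eigenvalue_mem_eigenvalues3[OF ev v(2,1)] by auto
  ultimately have "k > 0" and "b \<le> trace Q - 3 * \<mu> + 2 * \<mu> / k"
    using bound by auto
  then have "k * b \<le> k * (trace Q - 3 * \<mu>) + 2 * \<mu>"
    by (simp add: field_simps)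
  also have "\<dots> \<le> k * Max ((\<lambda>u. DeltaQ Q u v) ` U)"
    using sum_le_card_mult_Max[OF \<open>finite U\<close>, of e "{i. a i = \<mu>}" "\<lambda>u. DeltaQ Q u v"]
      range sum_DeltaQ_eigenspace[OF sym on eig v] k_def by auto
  finally show "b \<le> Max ((\<lambda>u. DeltaQ Q u v) ` U)"
    using \<open>k > 0\<close> by simp
qed

lemma orthonormal_family_of_triple:
  assumes "\<exists>e1\<in>S. \<exists>e2\<in>S. \<exists>e3\<in>S. e1 \<bullet> e2 = 0 \<and> e1 \<bullet> e3 = 0 \<and> e2 \<bullet> e3 = 0"
    and "S \<subseteq> {u. norm u = 1}"
  obtains e :: "3 \<Rightarrow> real^3"
  where "\<And>i j. e i \<bullet> e j = (if i = j then 1 else 0)" and "range e \<subseteq> S"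
proof -
  obtain e1 e2 e3 where S: "e1 \<in> S" "e2 \<in> S" "e3 \<in> S"
    and orth: "e1 \<bullet> e2 = 0" "e1 \<bullet> e3 = 0" "e2 \<bullet> e3 = 0"
    using assms(1) by blast
  then have "e1 \<bullet> e1 = 1" "e2 \<bullet> e2 = 1" "e3 \<bullet> e3 = 1"
    using assms(2) by (auto simp: dot_square_norm)
  define e where "e = (\<lambda>i::3. if i = 1 then e1 else if i = 2 then e2 else e3)"
  have "e i \<bullet> e j = (if i = j then 1 else 0)" for i j
    using exhaust_3[of i] exhaust_3[of j] orth \<open>e1 \<bullet> e1 = 1\<close> \<open>e2 \<bullet> e2 = 1\<close> \<open>e3 \<bullet> e3 = 1\<close>
    by (auto simp: e_def inner_commute)
  moreover have "range e \<subseteq> S"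
    unfolding UNIV_3 e_def using S by auto
  ultimately show thesis
    using that by blast
qed

theorem lemma2:
  fixes Q :: "real^3^3" and U :: "(real^3) set" and l1 l2 l3 :: real
  assumes "sym_psd Q"
    and "eigenvalues3 Q l1 l2 l3"
    and "finite U"
    and "U \<subseteq> {u. norm u = 1}"
  shows "((\<exists>e1\<in>U. \<exists>e2\<in>U. \<exists>e3\<in>U.
             e1 \<in> unit_eigvecs Q \<and> e2 \<in> unit_eigvecs Q \<and> e3 \<in> unit_eigvecs Q \<and>
             e1 \<bullet> e2 = 0 \<and> e1 \<bullet> e3 = 0 \<and> e2 \<bullet> e3 = 0) \<longrightarrow>
           ((l1 = l2 \<and> l2 = l3 \<and> l1 > 0 \<longrightarrow> DeltaQ_star Q U \<ge> 2/3 * l1) \<and>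
            (l1 = l2 \<and> l1 \<noteq> l3 \<and> l3 > 0 \<longrightarrow> DeltaQ_star Q U \<ge> min (l1 + l2) l3) \<and>
            (l1 \<noteq> l2 \<and> l1 \<noteq> l3 \<and> l2 \<noteq> l3 \<longrightarrow>
               DeltaQ_star Q U \<ge> trace Q - Max {l1, l2, l3})))
       \<and> ((trace Q - 2 * Max {l1, l2, l3} > 0 \<and>
            (\<exists>e1\<in>U. \<exists>e2\<in>U. \<exists>e3\<in>U.
               e1 \<bullet> e2 = 0 \<and> e1 \<bullet> e3 = 0 \<and> e2 \<bullet> e3 = 0)) \<longrightarrow>
           DeltaQ_star Q U \<ge> 2/3 * (trace Q - 2 * Max {l1, l2, l3}))"
proof (intro conjI impI)
  assume "\<exists>e1\<in>U. \<exists>e2\<in>U. \<exists>e3\<in>U.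
    e1 \<in> unit_eigvecs Q \<and> e2 \<in> unit_eigvecs Q \<and> e3 \<in> unit_eigvecs Q \<and>
    e1 \<bullet> e2 = 0 \<and> e1 \<bullet> e3 = 0 \<and> e2 \<bullet> e3 = 0"
  then have "\<exists>e1\<in>U \<inter> unit_eigvecs Q. \<exists>e2\<in>U \<inter> unit_eigvecs Q. \<exists>e3\<in>U \<inter> unit_eigvecs Q.
    e1 \<bullet> e2 = 0 \<and> e1 \<bullet> e3 = 0 \<and> e2 \<bullet> e3 = 0"
    by blast
  then obtain e :: "3 \<Rightarrow> real^3" where on: "\<And>i j. e i \<bullet> e j = (if i = j then 1 else 0)"
    and range: "range e \<subseteq> U \<inter> unit_eigvecs Q"
    by (rule orthonormal_family_of_triple) (auto simp: unit_eigvecs_def)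
  have sym: "transpose Q = Q"
    using assms(1) unfolding sym_psd_def by blast
  note bound = DeltaQ_star_ge_eigenbasis[OF sym assms(2,3) on range]
  note tr = trace_eq_sum_eigenvalues3[OF assms(2)]
  show "l1 = l2 \<and> l2 = l3 \<and> l1 > 0 \<Longrightarrow> DeltaQ_star Q U \<ge> 2/3 * l1"
    by (rule bound) (auto simp: tr)
  show "l1 = l2 \<and> l1 \<noteq> l3 \<and> l3 > 0 \<Longrightarrow> DeltaQ_star Q U \<ge> min (l1 + l2) l3"
    by (rule bound) (auto simp: tr)
  show "l1 \<noteq> l2 \<and> l1 \<noteq> l3 \<and> l2 \<noteq> l3 \<Longrightarrow> DeltaQ_star Q U \<ge> trace Q - Max {l1, l2, l3}"
    by (rule bound) auto
next
  assume "trace Q - 2 * Max {l1, l2, l3} > 0 \<and>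
    (\<exists>e1\<in>U. \<exists>e2\<in>U. \<exists>e3\<in>U. e1 \<bullet> e2 = 0 \<and> e1 \<bullet> e3 = 0 \<and> e2 \<bullet> e3 = 0)"
  then obtain e :: "3 \<Rightarrow> real^3" where "\<And>i j. e i \<bullet> e j = (if i = j then 1 else 0)" and "range e \<subseteq> U"
    using orthonormal_family_of_triple[OF _ assms(4)] by blast
  then show "DeltaQ_star Q U \<ge> 2/3 * (trace Q - 2 * Max {l1, l2, l3})"
    by (rule DeltaQ_star_ge_orthonormal[OF assms(2,3)])
qed

end
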